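(* Let $n\ge3$, let $A_n\le S_n$ be the alternating group and $\iota_n:A_n\hookrightarrow S_n$ the inclusion. Then $$|\mathsf{Desc}^1(\mathsf T^l_{\iota_n},(A_n,m_{A_n}))|=\begin{cases}1,& n=3,\\ k,& n\in\{4k,4k+1\}\ (k\ge1),\\ k+1,& n\in\{4k+2,4k+3\}\ (k\ge1).\end{cases}$$ (Equivalently, this is the number of conjugacy classes of complements to $A_n$ in $S_n$, which are the subgroups $\{1,\sigma\}$ with $\sigma$ a product of an odd number of disjoint transpositions.)
   Context: For a subgroup $B$ of a group $A$ with inclusion $\imath$, $\mathcal Z^1(\mathsf T^l_{\imath},(B,m_B))$ is identified with the set of maps $q:A\to B$ satisfying (ZL1) $q(1)=1$; (ZL2) $q(ba)=b\,q(a)$ for $b\in B,a\in A$; (ZL3) $q(aa')=q(a\,q(a'))$ for $a,a'\in A$ (the algebra structures on the left $B$-set $B$ for the monad $A\otimes_B-$ on left $B$-sets), and $\mathsf{Desc}^1(\mathsf T^l_{\imath},(B,m_B))$ is its quotient by $q\sim q'$ iff there is $b_0\in B$ with $q(a)b_0=q'(ab_0)$ for all $a\in A$. *)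

theory Defs
  imports "HOL-Algebra.Sym_Groups"
begin

definition Z1_incl :: "('a, 'm) monoid_scheme \<Rightarrow> 'a set \<Rightarrow> ('a \<Rightarrow> 'a) set" where
  "Z1_incl A B = {q. q \<in> carrier A \<rightarrow>\<^sub>E B
      \<and> q \<one>\<^bsub>A\<^esub> = \<one>\<^bsub>A\<^esub>
      \<and> (\<forall>b\<in>B. \<forall>a\<in>carrier A. q (b \<otimes>\<^bsub>A\<^esub> a) = b \<otimes>\<^bsub>A\<^esub> q a)
      \<and> (\<forall>a\<in>carrier A. \<forall>a'\<in>carrier A. q (a \<otimes>\<^bsub>A\<^esub> a') = q (a \<otimes>\<^bsub>A\<^esub> q a'))}"

definition Desc_rel :: "('a, 'm) monoid_scheme \<Rightarrow> 'a set \<Rightarrow> (('a \<Rightarrow> 'a) \<times> ('a \<Rightarrow> 'a)) set" where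
  "Desc_rel A B = {(q, q'). q \<in> Z1_incl A B \<and> q' \<in> Z1_incl A B
      \<and> (\<exists>b0\<in>B. \<forall>a\<in>carrier A. q a \<otimes>\<^bsub>A\<^esub> b0 = q' (a \<otimes>\<^bsub>A\<^esub> b0))}"

definition Desc1_incl :: "('a, 'm) monoid_scheme \<Rightarrow> 'a set \<Rightarrow> ('a \<Rightarrow> 'a) set set" where
  "Desc1_incl A B = Z1_incl A B // Desc_rel A B"

end

theory Submission
  imports Defs
begin

text \<open>For a subgroup \<open>H\<close> of index two in \<open>G\<close>, a map \<open>q\<close> satisfying (ZL1)--(ZL3) is the identity
  on \<open>H\<close> and is \<open>a \<mapsto> a s\<close> on the other coset, for an involution \<open>s \<notin> H\<close>: it is the retraction
  along the complement \<open>{1, s}\<close>. Two such maps are equivalent iff their involutions are conjugate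
  under \<open>H\<close>, and for an involution outside \<open>H\<close> this is the same as conjugacy under \<open>G\<close>. In \<open>S\<^sub>n\<close>
  an involution is determined up to conjugacy by the number \<open>2j\<close> of points it moves, and it is odd
  iff \<open>j\<close> is odd; the odd \<open>j\<close> with \<open>2j \<le> n\<close> number \<open>\<lfloor>(n + 2)/4\<rfloor>\<close>.\<close>

lemma card_quotient_image:
  assumes r_sub: "r \<subseteq> h ` X \<times> h ` X"
    and r_iff: "\<And>x y. x \<in> X \<Longrightarrow> y \<in> X \<Longrightarrow> (h x, h y) \<in> r \<longleftrightarrow> f x = f y"
  shows "card ((h ` X) // r) = card (f ` X)"
proof -
  define cls where "cls v = h ` {x \<in> X. f x = v}" for v
  have class_eq: "r `` {h x} = cls (f x)" if "x \<in> X" for x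
  proof
    show "r `` {h x} \<subseteq> cls (f x)"
    proof
      fix z assume "z \<in> r `` {h x}"
      moreover from this obtain y where "y \<in> X" "z = h y" using r_sub by blast
      ultimately have "f x = f y" using r_iff[OF that] by simp
      then show "z \<in> cls (f x)" using \<open>y \<in> X\<close> \<open>z = h y\<close> unfolding cls_def by auto
    qed
    show "cls (f x) \<subseteq> r `` {h x}"
    proof
      fix z assume "z \<in> cls (f x)"
      then obtain y where "y \<in> X" "f y = f x" "z = h y" unfolding cls_def by auto
      then show "z \<in> r `` {h x}" using r_iff[OF that] by simp
    qed
  qed
  have "(h ` X) // r = cls ` f ` X"
    unfolding quotient_def using class_eq by blast
  moreover have "inj_on cls (f ` X)"
  proof (rule inj_onI)
    fix v w assume "v \<in> f ` X" "w \<in> f ` X" and eq: "cls v = cls w"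
    then obtain x y where x: "x \<in> X" "v = f x" and y: "y \<in> X" "w = f y" by blast
    with eq have "h x \<in> cls (f y)" unfolding cls_def by auto
    then obtain y' where y': "y' \<in> X" "f y' = f y" "h x = h y'" unfolding cls_def by auto
    have "(h x, h x) \<in> r" using r_iff[OF x(1) x(1)] by simp
    then have "f x = f y'" using r_iff[OF x(1) y'(1)] y'(3) by simp
    then show "v = w" using x y y'(2) by simp
  qed
  ultimately show ?thesis by (simp add: card_image)
qed

lemma Z1_inclD:
  assumes "q \<in> Z1_incl A B"
  shows "q \<in> carrier A \<rightarrow>\<^sub>E B" and "q \<one>\<^bsub>A\<^esub> = \<one>\<^bsub>A\<^esub>"
    and "\<And>b a. b \<in> B \<Longrightarrow> a \<in> carrier A \<Longrightarrow> q (b \<otimes>\<^bsub>A\<^esub> a) = b \<otimes>\<^bsub>A\<^esub> q a"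
    and "\<And>a a'. a \<in> carrier A \<Longrightarrow> a' \<in> carrier A \<Longrightarrow> q (a \<otimes>\<^bsub>A\<^esub> a') = q (a \<otimes>\<^bsub>A\<^esub> q a')"
  using assms unfolding Z1_incl_def by blast+

section \<open>Subgroups of index two\<close>

text \<open>Writing \<open>a = h c\<close> with \<open>h \<in> H\<close> and \<open>c\<close> in the complement \<open>{\<one>, s}\<close>, this returns \<open>h\<close>,
  which is \<open>a s\<inverse> = a s\<close> when \<open>a \<notin> H\<close>.\<close>
definition complement_retraction :: "('a, 'm) monoid_scheme \<Rightarrow> 'a set \<Rightarrow> 'a \<Rightarrow> 'a \<Rightarrow> 'a" where
  "complement_retraction G H s = (\<lambda>a\<in>carrier G. if a \<in> H then a else a \<otimes>\<^bsub>G\<^esub> s)"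

definition outer_involutions :: "('a, 'm) monoid_scheme \<Rightarrow> 'a set \<Rightarrow> 'a set" where
  "outer_involutions G H = {s \<in> carrier G - H. s \<otimes>\<^bsub>G\<^esub> s = \<one>\<^bsub>G\<^esub>}"

locale index_two_subgroup = group G for G (structure) +
  fixes H
  assumes subgroup: "subgroup H G"
    and proper: "H \<subset> carrier G"
    and outside_mult: "\<lbrakk>a \<in> carrier G - H; b \<in> carrier G - H\<rbrakk> \<Longrightarrow> a \<otimes> b \<in> H"

context index_two_subgroup
begin

lemmas subgroup_mem_carrier = subgroup.mem_carrier[OF subgroup]

lemma mult_outside_left:
  assumes b: "b \<in> H" and a: "a \<in> carrier G - H" shows "b \<otimes> a \<notin> H"
proof
  assume "b \<otimes> a \<in> H"
  then have "inv b \<otimes> (b \<otimes> a) \<in> H"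
    using b subgroup by (simp add: subgroup.m_closed subgroup.m_inv_closed)
  then show False using a b subgroup_mem_carrier by (simp add: m_assoc[symmetric])
qed

lemma mult_outside_right:
  assumes b: "b \<in> H" and a: "a \<in> carrier G - H" shows "a \<otimes> b \<notin> H"
proof
  assume "a \<otimes> b \<in> H"
  then have "(a \<otimes> b) \<otimes> inv b \<in> H"
    using b subgroup by (simp add: subgroup.m_closed subgroup.m_inv_closed)
  then show False using a b subgroup_mem_carrier by (simp add: m_assoc)
qed

lemma retraction_inside: "a \<in> H \<Longrightarrow> complement_retraction G H s a = a"
  by (simp add: complement_retraction_def subgroup_mem_carrier)

lemma retraction_outside: "a \<in> carrier G - H \<Longrightarrow> complement_retraction G H s a = a \<otimes> s"
  by (simp add: complement_retraction_def)

lemma retraction_in_Z1: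
  assumes s: "s \<in> outer_involutions G H"
  shows "complement_retraction G H s \<in> Z1_incl G H"
proof -
  let ?q = "complement_retraction G H s"
  have sG: "s \<in> carrier G - H" and ss: "s \<otimes> s = \<one>"
    using s by (auto simp: outer_involutions_def)
  have "?q \<in> carrier G \<rightarrow>\<^sub>E H"
  proof (rule PiE_I)
    fix a assume "a \<in> carrier G"
    then show "?q a \<in> H"
      using sG by (cases "a \<in> H") (simp_all add: retraction_inside retraction_outside outside_mult)
  qed (simp add: complement_retraction_def)
  moreover have "?q \<one> = \<one>"
    using subgroup.one_closed[OF subgroup] by (rule retraction_inside)
  moreover have "?q (b \<otimes> a) = b \<otimes> ?q a" if b: "b \<in> H" and a: "a \<in> carrier G" for a b
  proof (cases "a \<in> H")
    case True
    then show ?thesis using b subgroup by (simp add: retraction_inside subgroup.m_closed)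
  next
    case False
    then have "b \<otimes> a \<in> carrier G - H" using a b mult_outside_left subgroup_mem_carrier by auto
    then show ?thesis using a b False sG subgroup_mem_carrier by (simp add: retraction_outside m_assoc)
  qed
  moreover have "?q (a \<otimes> a') = ?q (a \<otimes> ?q a')" if a: "a \<in> carrier G" and a': "a' \<in> carrier G" for a a'
  proof (cases "a' \<in> H")
    case False
    then have q_a': "a \<otimes> ?q a' = (a \<otimes> a') \<otimes> s"
      using a a' sG by (simp add: retraction_outside m_assoc)
    show ?thesis
    proof (cases "a \<otimes> a' \<in> H")
      case True
      then have "(a \<otimes> a') \<otimes> s \<in> carrier G - H"
        using mult_outside_left[OF True sG] a a' sG by simp
      then show ?thesis
        using True q_a' a a' sG ss by (simp add: retraction_outside retraction_inside m_assoc)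
    next
      case False
      then have "(a \<otimes> a') \<otimes> s \<in> H" using a a' sG outside_mult by simp
      then show ?thesis using False q_a' a a' by (simp add: retraction_outside retraction_inside)
    qed
  qed (simp add: retraction_inside)
  ultimately show ?thesis unfolding Z1_incl_def by blast
qed

lemma inv_outside: "t \<in> carrier G - H \<Longrightarrow> inv t \<in> carrier G - H"
  using subgroup.m_inv_closed[OF subgroup, of "inv t"] by auto

lemma Z1_incl_fixes_subgroup:
  assumes q: "q \<in> Z1_incl G H" and b: "b \<in> H"
  shows "q b = b"
proof -
  have bG: "b \<in> carrier G" using b by (rule subgroup_mem_carrier)
  then have "q b = q (b \<otimes> \<one>)" by simp
  also have "\<dots> = b \<otimes> q \<one>" using Z1_inclD(3)[OF q b] by blast
  also have "\<dots> = b" using Z1_inclD(2)[OF q] bG by simp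
  finally show ?thesis .
qed

lemma Z1_incl_outside:
  assumes q: "q \<in> Z1_incl G H" and t: "t \<in> carrier G - H" and a: "a \<in> carrier G - H"
  shows "q a = a \<otimes> (inv t \<otimes> q t)"
proof -
  have at: "a \<otimes> inv t \<in> H" using outside_mult[OF a inv_outside[OF t]] .
  have qt: "q t \<in> carrier G" using Z1_inclD(1)[OF q] t subgroup_mem_carrier by auto
  have "q a = q ((a \<otimes> inv t) \<otimes> t)" using a t by (simp add: m_assoc)
  also have "\<dots> = (a \<otimes> inv t) \<otimes> q t" using Z1_inclD(3)[OF q at] t by blast
  also have "\<dots> = a \<otimes> (inv t \<otimes> q t)" using a t qt by (simp add: m_assoc)
  finally show ?thesis .
qed

lemma Z1_incl_outer_involution:
  assumes q: "q \<in> Z1_incl G H" and t: "t \<in> carrier G - H"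
  shows "inv t \<otimes> q t \<in> outer_involutions G H"
proof -
  define s where "s = inv t \<otimes> q t"
  have qt: "q t \<in> H" using Z1_inclD(1)[OF q] t by auto
  have tinv: "inv t \<in> carrier G - H" using t by (rule inv_outside)
  have sG: "s \<in> carrier G - H"
    using t qt subgroup_mem_carrier mult_outside_right[OF qt tinv] unfolding s_def by simp
  have q_outside: "q a = a \<otimes> s" if "a \<in> carrier G - H" for a
    unfolding s_def using Z1_incl_outside[OF q t that] .
  have "\<one> = q (t \<otimes> inv t)"
    using t Z1_incl_fixes_subgroup[OF q subgroup.one_closed[OF subgroup]] by simp
  also have "\<dots> = q (t \<otimes> q (inv t))"
    using Z1_inclD(4)[OF q] t tinv by blast
  also have "\<dots> = q s"
    using t sG by (simp add: q_outside[OF tinv] m_assoc[symmetric])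
  also have "\<dots> = s \<otimes> s" by (rule q_outside[OF sG])
  finally show ?thesis using sG unfolding s_def outer_involutions_def by simp
qed

lemma Z1_incl_is_retraction:
  assumes q: "q \<in> Z1_incl G H" and t: "t \<in> carrier G - H"
  shows "q = complement_retraction G H (inv t \<otimes> q t)"
proof
  fix a show "q a = complement_retraction G H (inv t \<otimes> q t) a"
  proof (cases "a \<in> carrier G")
    case True
    then show ?thesis
      using Z1_incl_fixes_subgroup[OF q] Z1_incl_outside[OF q t]
      by (cases "a \<in> H") (simp_all add: retraction_inside retraction_outside)
  next
    case False
    then show ?thesis using Z1_inclD(1)[OF q] unfolding complement_retraction_def by auto
  qed
qed

lemma Z1_incl_eq: "Z1_incl G H = complement_retraction G H ` outer_involutions G H"
proof
  show "complement_retraction G H ` outer_involutions G H \<subseteq> Z1_incl G H"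
    using retraction_in_Z1 by blast
  obtain t where t: "t \<in> carrier G - H" using proper by blast
  show "Z1_incl G H \<subseteq> complement_retraction G H ` outer_involutions G H"
    using Z1_incl_is_retraction[OF _ t] Z1_incl_outer_involution[OF _ t] by blast
qed

lemma Desc_rel_retraction_iff:
  assumes s: "s \<in> outer_involutions G H" and s': "s' \<in> outer_involutions G H"
  shows "(complement_retraction G H s, complement_retraction G H s') \<in> Desc_rel G H
    \<longleftrightarrow> (\<exists>b\<in>H. s \<otimes> b = b \<otimes> s')"
proof -
  let ?q = "complement_retraction G H s" and ?q' = "complement_retraction G H s'"
  have sG: "s \<in> carrier G - H" and ss: "s \<otimes> s = \<one>"
    and s'G: "s' \<in> carrier G - H" and s's': "s' \<otimes> s' = \<one>"
    using s s' by (auto simp: outer_involutions_def)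
  have "(\<forall>a\<in>carrier G. ?q a \<otimes> b = ?q' (a \<otimes> b)) \<longleftrightarrow> s \<otimes> b = b \<otimes> s'" if b: "b \<in> H" for b
  proof
    assume "\<forall>a\<in>carrier G. ?q a \<otimes> b = ?q' (a \<otimes> b)"
    then have "?q s \<otimes> b = ?q' (s \<otimes> b)" using sG by blast
    moreover have "s \<otimes> b \<in> carrier G - H"
      using mult_outside_right[OF b sG] sG b subgroup_mem_carrier by simp
    ultimately have "b = s \<otimes> b \<otimes> s'"
      using sG ss b subgroup_mem_carrier by (simp add: retraction_outside)
    then have "b \<otimes> s' = (s \<otimes> b \<otimes> s') \<otimes> s'" by (rule arg_cong)
    also have "\<dots> = s \<otimes> b" using sG s'G s's' b subgroup_mem_carrier by (simp add: m_assoc)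
    finally show "s \<otimes> b = b \<otimes> s'" by (rule sym)
  next
    assume conj: "s \<otimes> b = b \<otimes> s'"
    show "\<forall>a\<in>carrier G. ?q a \<otimes> b = ?q' (a \<otimes> b)"
    proof
      fix a assume a: "a \<in> carrier G"
      show "?q a \<otimes> b = ?q' (a \<otimes> b)"
      proof (cases "a \<in> H")
        case True
        then show ?thesis using b subgroup by (simp add: retraction_inside subgroup.m_closed)
      next
        case False
        then have "a \<otimes> b \<in> carrier G - H"
          using mult_outside_right[OF b] a b subgroup_mem_carrier by simp
        then show ?thesis
          using False a b sG s'G conj subgroup_mem_carrier by (simp add: retraction_outside m_assoc)
      qed
    qed
  qed
  moreover have "?q \<in> Z1_incl G H" "?q' \<in> Z1_incl G H"
    using s s' by (simp_all add: retraction_in_Z1)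
  ultimately show ?thesis unfolding Desc_rel_def by auto
qed

lemma conjugate_in_subgroup_iff:
  assumes s: "s \<in> carrier G" and s': "s' \<in> outer_involutions G H"
  shows "(\<exists>b\<in>H. s \<otimes> b = b \<otimes> s') \<longleftrightarrow> (\<exists>g\<in>carrier G. s \<otimes> g = g \<otimes> s')"
proof
  assume "\<exists>b\<in>H. s \<otimes> b = b \<otimes> s'"
  then show "\<exists>g\<in>carrier G. s \<otimes> g = g \<otimes> s'" using subgroup_mem_carrier by blast
next
  assume "\<exists>g\<in>carrier G. s \<otimes> g = g \<otimes> s'"
  then obtain g where g: "g \<in> carrier G" and conj: "s \<otimes> g = g \<otimes> s'" by blast
  have s'G: "s' \<in> carrier G - H" and s's': "s' \<otimes> s' = \<one>"
    using s' by (auto simp: outer_involutions_def)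
  show "\<exists>b\<in>H. s \<otimes> b = b \<otimes> s'"
  proof (cases "g \<in> H")
    case False
    \<comment> \<open>\<open>s'\<close> commutes with itself and lies outside \<open>H\<close>, so it moves \<open>g\<close> into \<open>H\<close>\<close>
    have "s \<otimes> (g \<otimes> s') = (g \<otimes> s') \<otimes> s'"
      using conj s g s'G by (simp add: m_assoc[symmetric])
    moreover have "g \<otimes> s' \<in> H" using outside_mult False g s'G by simp
    ultimately show ?thesis by blast
  qed (use conj in blast)
qed

theorem card_Desc1_incl:
  assumes conj_iff: "\<And>s s'. s \<in> outer_involutions G H \<Longrightarrow> s' \<in> outer_involutions G H \<Longrightarrow>
      (\<exists>g\<in>carrier G. s \<otimes> g = g \<otimes> s') \<longleftrightarrow> f s = f s'"
  shows "card (Desc1_incl G H) = card (f ` outer_involutions G H)"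
  unfolding Desc1_incl_def Z1_incl_eq
proof (rule card_quotient_image)
  show "Desc_rel G H \<subseteq> complement_retraction G H ` outer_involutions G H \<times>
      complement_retraction G H ` outer_involutions G H"
    unfolding Desc_rel_def Z1_incl_eq[symmetric] by blast
  fix s s' assume "s \<in> outer_involutions G H" "s' \<in> outer_involutions G H"
  then show "(complement_retraction G H s, complement_retraction G H s') \<in> Desc_rel G H
      \<longleftrightarrow> f s = f s'"
    by (simp add: Desc_rel_retraction_iff conjugate_in_subgroup_iff conj_iff outer_involutions_def)
qed

end

section \<open>Involutions\<close>

definition moved_points :: "('a \<Rightarrow> 'a) \<Rightarrow> 'a set" where
  "moved_points f = {x. f x \<noteq> x}"

lemma involution_remove_pair:
  fixes s :: "'a \<Rightarrow> 'a" and x :: 'a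
  assumes invol: "\<And>z. s (s z) = z"
  defines "s1 \<equiv> s(x := x, s x := s x)"
  shows "\<And>z. s1 (s1 z) = z"
    and "moved_points s1 = moved_points s - {x, s x}"
    and "s = transpose x (s x) \<circ> s1"
proof -
  have s_ne: "s z \<noteq> x" "s z \<noteq> s x" if "z \<noteq> x" "z \<noteq> s x" for z
    using that invol by metis+
  show "s1 (s1 z) = z" for z
    using s_ne[of z] invol unfolding s1_def by auto
  show "moved_points s1 = moved_points s - {x, s x}"
    unfolding s1_def moved_points_def by auto
  show "s = transpose x (s x) \<circ> s1"
    using s_ne invol unfolding s1_def by (auto simp: fun_eq_iff transpose_def)
qed

lemma card_moved_points_remove_pair:
  assumes invol: "\<And>z. s (s z) = z" and x: "x \<in> moved_points s" and fin: "finite (moved_points s)"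
  shows "card (moved_points (s(x := x, s x := s x))) + 2 = card (moved_points s)"
proof -
  have pair: "{x, s x} \<subseteq> moved_points s" "card {x, s x} = 2"
    using x invol unfolding moved_points_def by (auto simp: card_insert_if)
  then show ?thesis
    using involution_remove_pair(2)[OF invol, of x] card_mono[OF fin pair(1)] fin
    by (simp add: card_Diff_subset)
qed

lemma involution_permutation:
  assumes "\<And>z. s (s z) = z" and "finite (moved_points s)"
  shows "permutation s"
  using assms involuntory_imp_bij unfolding permutation moved_points_def by blast

lemma involution_parity:
  assumes "finite (moved_points s)" and "\<And>z. s (s z) = z"
  shows "even (card (moved_points s)) \<and> (evenperm s \<longleftrightarrow> even (card (moved_points s) div 2))"
  using assms
proof (induction "card (moved_points s)" arbitrary: s rule: less_induct)
  case less
  show ?case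
  proof (cases "moved_points s = {}")
    case True
    then have "s = id" unfolding moved_points_def by auto
    then show ?thesis using True by simp
  next
    case False
    then obtain x where x: "x \<in> moved_points s" by blast
    define s1 where "s1 = s(x := x, s x := s x)"
    note pair = involution_remove_pair[OF less.prems(2), of x, folded s1_def]
    have card_s1: "card (moved_points s1) + 2 = card (moved_points s)"
      unfolding s1_def using card_moved_points_remove_pair[OF less.prems(2) x less.prems(1)] .
    have fin_s1: "finite (moved_points s1)" using pair(2) less.prems(1) by simp
    have IH: "even (card (moved_points s1)) \<and> (evenperm s1 \<longleftrightarrow> even (card (moved_points s1) div 2))"
      using less.hyps[of s1] card_s1 fin_s1 pair(1) by simp
    have "evenperm (transpose x (s x) \<circ> s1) \<longleftrightarrow> evenperm (transpose x (s x)) = evenperm s1"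
      by (rule evenperm_comp[OF permutation_swap_id involution_permutation[OF pair(1) fin_s1]])
    moreover have "s x \<noteq> x" using x unfolding moved_points_def by simp
    ultimately have "evenperm s \<longleftrightarrow> \<not> evenperm s1"
      unfolding pair(3)[symmetric] by (simp add: evenperm_swap)
    then show ?thesis using IH card_s1[symmetric] by auto
  qed
qed

lemma conjugating_bij_extend:
  assumes p: "bij_betw p (S - {x, s x}) (S' - {y, s' y})"
    and conj: "\<forall>z \<in> S - {x, s x}. p ((s(x := x, s x := s x)) z) = (s'(y := y, s' y := s' y)) (p z)"
    and invol: "\<And>z. s (s z) = z" and invol': "\<And>z. s' (s' z) = z"
    and x: "x \<in> S" "s x \<in> S" "s x \<noteq> x" and y: "y \<in> S'" "s' y \<in> S'" "s' y \<noteq> y"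
  defines "p' \<equiv> p(x := y, s x := s' y)"
  shows "bij_betw p' S S'" and "\<forall>z\<in>S. p' (s z) = s' (p' z)"
proof -
  have "bij_betw p' (S - {x, s x}) (S' - {y, s' y})"
    using p by (rule bij_betw_cong[THEN iffD1, rotated]) (simp add: p'_def)
  moreover have "bij_betw p' {x, s x} {y, s' y}"
    using x(3) y(3) unfolding p'_def bij_betw_def by (auto simp: inj_on_def)
  ultimately have "bij_betw p' (S - {x, s x} \<union> {x, s x}) (S' - {y, s' y} \<union> {y, s' y})"
    by (rule bij_betw_combine) blast
  moreover have "S - {x, s x} \<union> {x, s x} = S" "S' - {y, s' y} \<union> {y, s' y} = S'"
    using x y by auto
  ultimately show "bij_betw p' S S'" by simp
  show "\<forall>z\<in>S. p' (s z) = s' (p' z)"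
  proof
    fix z assume "z \<in> S"
    then consider "z \<in> {x, s x}" | "z \<in> S - {x, s x}" by blast
    then show "p' (s z) = s' (p' z)"
    proof cases
      case 1
      then show ?thesis using x(3) invol invol' unfolding p'_def by auto
    next
      case 2
      then have "z \<noteq> x" "z \<noteq> s x" by auto
      then have "s z \<notin> {x, s x}" using invol by (metis insert_iff singletonD)
      moreover have "p z \<notin> {y, s' y}" using p 2 bij_betwE by blast
      ultimately show ?thesis using 2 conj unfolding p'_def by auto
    qed
  qed
qed

lemma involutions_conjugate:
  assumes "finite S" "finite S'" "card S = card S'"
    and "\<And>z. s (s z) = z" "\<And>z. s' (s' z) = z"
    and "moved_points s \<subseteq> S" "moved_points s' \<subseteq> S'"
    and "card (moved_points s) = card (moved_points s')"
  shows "\<exists>p. bij_betw p S S' \<and> (\<forall>z\<in>S. p (s z) = s' (p z))"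
  using assms
proof (induction "card (moved_points s)" arbitrary: S S' s s' rule: less_induct)
  case less
  have fin: "finite (moved_points s)" "finite (moved_points s')"
    using less.prems finite_subset by blast+
  show ?case
  proof (cases "moved_points s = {}")
    case True
    then have "moved_points s' = {}" using less.prems(8) fin by simp
    then have "s = id" "s' = id" using True unfolding moved_points_def by auto
    moreover obtain p where "bij_betw p S S'" using finite_same_card_bij less.prems(1-3) by blast
    ultimately show ?thesis by auto
  next
    case False
    then obtain x where x: "x \<in> moved_points s" by blast
    moreover obtain y where y: "y \<in> moved_points s'"
      using False less.prems(8) fin by fastforce
    ultimately have xy: "s x \<in> moved_points s" "s' y \<in> moved_points s'"
      using less.prems(4,5) unfolding moved_points_def by auto
    define s1 where "s1 = s(x := x, s x := s x)"
    define s1' where "s1' = s'(y := y, s' y := s' y)"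
    note pair = involution_remove_pair[OF less.prems(4), of x, folded s1_def]
    note pair' = involution_remove_pair[OF less.prems(5), of y, folded s1'_def]
    have x_pair: "x \<in> S" "s x \<in> S" "s x \<noteq> x" and y_pair: "y \<in> S'" "s' y \<in> S'" "s' y \<noteq> y"
      using x y xy less.prems(6,7) unfolding moved_points_def by auto
    have card_s1: "card (moved_points s1) + 2 = card (moved_points s)"
      unfolding s1_def using card_moved_points_remove_pair[OF less.prems(4) x fin(1)] .
    have card_s1': "card (moved_points s1') + 2 = card (moved_points s')"
      unfolding s1'_def using card_moved_points_remove_pair[OF less.prems(5) y fin(2)] .
    have lt: "card (moved_points s1) < card (moved_points s)" using card_s1 by linarith
    have "\<exists>p. bij_betw p (S - {x, s x}) (S' - {y, s' y}) \<and> (\<forall>z\<in>S - {x, s x}. p (s1 z) = s1' (p z))"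
    proof (rule less.hyps[OF lt])
      show "finite (S - {x, s x})" "finite (S' - {y, s' y})" using less.prems(1,2) by simp_all
      show "card (S - {x, s x}) = card (S' - {y, s' y})"
        using less.prems(1-3) x_pair y_pair by (simp add: card_Diff_subset)
      show "moved_points s1 \<subseteq> S - {x, s x}" "moved_points s1' \<subseteq> S' - {y, s' y}"
        using pair(2) pair'(2) less.prems(6,7) by blast+
      show "card (moved_points s1) = card (moved_points s1')"
        using card_s1 card_s1' less.prems(8) by simp
    qed (use pair(1) pair'(1) in simp_all)
    then show ?thesis
      using conjugating_bij_extend[OF _ _ less.prems(4,5) x_pair y_pair] unfolding s1_def s1'_def by blast
  qed
qed

lemma permutes_moved_points: "s permutes S \<Longrightarrow> moved_points s \<subseteq> S"
  unfolding permutes_def moved_points_def by auto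

lemma moved_points_conj:
  assumes g: "bij g" and conj: "s \<circ> g = g \<circ> s'"
  shows "g ` moved_points s' = moved_points s"
proof
  have comm: "s (g z) = g (s' z)" for z using conj by (metis comp_apply)
  show "g ` moved_points s' \<subseteq> moved_points s"
    using comm bij_is_inj[OF g] unfolding moved_points_def by (auto dest: injD)
  show "moved_points s \<subseteq> g ` moved_points s'"
  proof
    fix w assume w: "w \<in> moved_points s"
    obtain z where z: "w = g z" using bij_is_surj[OF g] by (metis surj_def)
    then have "s' z \<noteq> z" using w comm unfolding moved_points_def by auto
    then show "w \<in> g ` moved_points s'" using z unfolding moved_points_def by blast
  qed
qed

section \<open>The alternating group in the symmetric group\<close>

lemma alt_group_index_two:
  assumes "n \<ge> 2"
  shows "index_two_subgroup (sym_group n) (carrier (alt_group n))"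
proof (intro index_two_subgroup.intro index_two_subgroup_axioms.intro)
  show "group (sym_group n)" by (rule sym_group_is_group)
  show "subgroup (carrier (alt_group n)) (sym_group n)" by (rule alt_group_is_subgroup)
  have "transpose 1 2 \<in> carrier (sym_group n) - carrier (alt_group n)"
    using assms by (simp add: sym_group_carrier alt_group_carrier permutes_swap_id evenperm_swap)
  then show "carrier (alt_group n) \<subset> carrier (sym_group n)"
    using alt_group_carrier sym_group_carrier by blast
  fix a b
  assume a: "a \<in> carrier (sym_group n) - carrier (alt_group n)"
    and b: "b \<in> carrier (sym_group n) - carrier (alt_group n)"
  then have "a \<in> carrier (sym_group n)" "b \<in> carrier (sym_group n)" "\<not> evenperm a" "\<not> evenperm b"
    by (auto simp: alt_group_carrier sym_group_carrier)
  then have "evenperm (a \<circ> b)"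
    using evenperm_comp[OF sym_group_carrier' sym_group_carrier'] by simp
  moreover have "a \<circ> b permutes {1..n}"
    using a b by (simp add: sym_group_carrier permutes_compose)
  ultimately show "a \<otimes>\<^bsub>sym_group n\<^esub> b \<in> carrier (alt_group n)"
    by (simp add: sym_group_mult alt_group_carrier)
qed

lemma outer_involutions_sym_group:
  "outer_involutions (sym_group n) (carrier (alt_group n))
    = {s. s permutes {1..n} \<and> (\<forall>z. s (s z) = z) \<and> \<not> evenperm s}"
  unfolding outer_involutions_def sym_group_mult sym_group_one fun_eq_iff
  by (simp add: sym_group_carrier alt_group_carrier) (rule Collect_cong, blast)

lemma sym_group_conjugate_iff:
  assumes s: "s permutes {1..n}" "\<And>z. s (s z) = z"
    and s': "s' permutes {1..n}" "\<And>z. s' (s' z) = z"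
  shows "(\<exists>g\<in>carrier (sym_group n). s \<otimes>\<^bsub>sym_group n\<^esub> g = g \<otimes>\<^bsub>sym_group n\<^esub> s')
    \<longleftrightarrow> card (moved_points s) = card (moved_points s')"
proof
  assume "\<exists>g\<in>carrier (sym_group n). s \<otimes>\<^bsub>sym_group n\<^esub> g = g \<otimes>\<^bsub>sym_group n\<^esub> s'"
  then obtain g where g: "g permutes {1..n}" "s \<circ> g = g \<circ> s'"
    by (auto simp: sym_group_carrier sym_group_mult)
  have "g ` moved_points s' = moved_points s"
    by (rule moved_points_conj[OF permutes_bij[OF g(1)] g(2)])
  then show "card (moved_points s) = card (moved_points s')"
    using card_image[OF inj_on_subset[OF permutes_inj[OF g(1)] subset_UNIV]] by metis
next
  assume "card (moved_points s) = card (moved_points s')"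
  then obtain p where p: "bij_betw p {1..n} {1..n}" and conj: "\<forall>z\<in>{1..n}. p (s' z) = s (p z)"
    using involutions_conjugate[OF finite_atLeastAtMost finite_atLeastAtMost refl s'(2) s(2)
        permutes_moved_points[OF s'(1)] permutes_moved_points[OF s(1)]] by metis
  define g where "g = restrict_id p {1..n}"
  have g_perm: "g permutes {1..n}" unfolding g_def by (rule permutes_restrict_id[OF p])
  have "s (g z) = g (s' z)" for z
  proof (cases "z \<in> {1..n}")
    case True
    then have "s' z \<in> {1..n}" using permutes_in_image[OF s'(1)] by blast
    then show ?thesis using True conj unfolding g_def by simp
  next
    case False
    then show ?thesis using permutes_not_in[OF s'(1)] permutes_not_in[OF s(1)] unfolding g_def by simp
  qed
  then have "s \<circ> g = g \<circ> s'" by (simp add: fun_eq_iff)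
  then show "\<exists>g\<in>carrier (sym_group n). s \<otimes>\<^bsub>sym_group n\<^esub> g = g \<otimes>\<^bsub>sym_group n\<^esub> s'"
    using g_perm by (auto simp: sym_group_carrier sym_group_mult)
qed

lemma exists_involution_moving:
  fixes j n :: nat
  assumes "2 * j \<le> n"
  shows "\<exists>s. s permutes {1..n} \<and> (\<forall>z. s (s z) = z) \<and> moved_points s = {1..2 * j}"
proof -
  \<comment> \<open>the reversal of \<open>{1..2j}\<close>; it fixes no point there since \<open>2j + 1\<close> is odd\<close>
  define s where "s z = (if z \<in> {1..2 * j} then 2 * j + 1 - z else z)" for z :: nat
  have invol: "s (s z) = z" for z unfolding s_def by auto
  have "moved_points s = {1..2 * j}" unfolding moved_points_def s_def by auto presburger
  moreover have "s permutes {1..n}"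
  proof (rule inj_imp_permutes)
    show "inj_on s {1..n}" by (metis inj_onI invol)
  qed (use assms in \<open>auto simp: s_def\<close>)
  ultimately show ?thesis using invol by blast
qed

lemma card_moved_points_odd_involutions:
  "(\<lambda>s. card (moved_points s)) ` {s. s permutes {1..n} \<and> (\<forall>z. s (s z) = z) \<and> \<not> evenperm s}
    = (\<lambda>j. 2 * j) ` {j. odd j \<and> 2 * j \<le> n}"
proof (intro equalityI subsetI)
  fix m assume "m \<in> (\<lambda>s. card (moved_points s)) ` {s. s permutes {1..n} \<and> (\<forall>z. s (s z) = z) \<and> \<not> evenperm s}"
  then obtain s where s: "s permutes {1..n}" "\<And>z. s (s z) = z" "\<not> evenperm s"
    and m: "m = card (moved_points s)" by blast
  have sub: "moved_points s \<subseteq> {1..n}" by (rule permutes_moved_points[OF s(1)])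
  then have "finite (moved_points s)" using finite_subset by blast
  then have "even m" "odd (m div 2)" using involution_parity[OF _ s(2)] s(3) m by auto
  moreover have "m \<le> n" using card_mono[OF _ sub] m by simp
  ultimately show "m \<in> (\<lambda>j. 2 * j) ` {j. odd j \<and> 2 * j \<le> n}"
    by (intro image_eqI[of _ _ "m div 2"]) auto
next
  fix m assume "m \<in> (\<lambda>j. 2 * j) ` {j. odd j \<and> 2 * j \<le> n}"
  then obtain j where j: "odd j" "2 * j \<le> n" "m = 2 * j" by blast
  then obtain s where s: "s permutes {1..n}" "\<And>z. s (s z) = z" "moved_points s = {1..2 * j}"
    using exists_involution_moving by metis
  then have "\<not> evenperm s" using involution_parity[of s] j(1) by simp
  then show "m \<in> (\<lambda>s. card (moved_points s)) ` {s. s permutes {1..n} \<and> (\<forall>z. s (s z) = z) \<and> \<not> evenperm s}"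
    using s j(3) by (intro image_eqI[of _ _ s]) auto
qed

lemma card_odd_le_half: "card {j::nat. odd j \<and> 2 * j \<le> n} = (n + 2) div 4"
proof -
  have "{j::nat. odd j \<and> 2 * j \<le> n} = (\<lambda>i. 2 * i + 1) ` {..<(n + 2) div 4}"
  proof (intro equalityI subsetI)
    fix j assume "j \<in> {j::nat. odd j \<and> 2 * j \<le> n}"
    then obtain i where "j = 2 * i + 1" "2 * j \<le> n" by (auto elim: oddE)
    then show "j \<in> (\<lambda>i. 2 * i + 1) ` {..<(n + 2) div 4}" by (auto intro!: image_eqI[of _ _ i])
  qed auto
  moreover have "inj (\<lambda>i::nat. 2 * i + 1)" by (auto simp: inj_on_def)
  ultimately show ?thesis by (simp add: card_image inj_on_subset)
qed

theorem card_Desc1_alt_group: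
  assumes "n \<ge> 2"
  shows "card (Desc1_incl (sym_group n) (carrier (alt_group n))) = (n + 2) div 4"
proof -
  interpret index_two_subgroup "sym_group n" "carrier (alt_group n)"
    using assms by (rule alt_group_index_two)
  have "card (Desc1_incl (sym_group n) (carrier (alt_group n)))
      = card ((\<lambda>s. card (moved_points s)) ` outer_involutions (sym_group n) (carrier (alt_group n)))"
    by (rule card_Desc1_incl) (auto simp: outer_involutions_sym_group sym_group_conjugate_iff)
  also have "\<dots> = card {j::nat. odd j \<and> 2 * j \<le> n}"
    unfolding outer_involutions_sym_group card_moved_points_odd_involutions
    by (rule card_image) (auto simp: inj_on_def)
  finally show ?thesis by (simp add: card_odd_le_half)
qed

theorem mainTheorem18:
  fixes n :: nat
  assumes "n \<ge> 3"
  shows "(n = 3 \<longrightarrow> card (Desc1_incl (sym_group n) (carrier (alt_group n))) = 1)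
       \<and> (\<forall>k\<ge>1. (n = 4*k \<or> n = 4*k+1) \<longrightarrow> card (Desc1_incl (sym_group n) (carrier (alt_group n))) = k)
       \<and> (\<forall>k\<ge>1. (n = 4*k+2 \<or> n = 4*k+3) \<longrightarrow> card (Desc1_incl (sym_group n) (carrier (alt_group n))) = k+1)"
proof -
  have "card (Desc1_incl (sym_group n) (carrier (alt_group n))) = (n + 2) div 4"
    using assms by (intro card_Desc1_alt_group) simp
  then show ?thesis by auto
qed

end
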